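(* Let $K$ be a field and $P$ an arbitrary poset. The quotient algebra $FI(P)/\mathrm{Rad}\,FI(P)$ is commutative, where $\mathrm{Rad}$ denotes the Jacobson radical.
   Context: $K$ is a field, $P$ an arbitrary poset. $I(P)$ is the set of functions $\alpha$ assigning to each pair $x\le y$ in $P$ a value $\alpha(x,y)\in K$. An element $\alpha\in I(P)$ is a finitary series if for all $x<y$ in $P$ there are only finitely many pairs $(u,v)$ with $x\le u<v\le y$ and $\alpha(u,v)\neq0$; $FI(P)$ is the set of finitary series. $FI(P)$ is an associative $K$-algebra under pointwise addition and convolution $(\alpha\beta)(x,y)=\sum_{x\le z\le y}\alpha(x,z)\beta(z,y)$. *)

theory Defs
  imports "HOL-Algebra.QuotRing"
begin

text \<open>Incidence-algebra elements: functions on pairs, normalised to vanish off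
  the relation x \<le> y. The poset is the carrier set P of a type with class order.\<close>

definition incidence :: "'a::order set \<Rightarrow> ('a \<Rightarrow> 'a \<Rightarrow> 'k::field) set" where
  "incidence P = {\<alpha>. \<forall>x y. \<alpha> x y \<noteq> 0 \<longrightarrow> x \<in> P \<and> y \<in> P \<and> x \<le> y}"

definition finitary :: "'a::order set \<Rightarrow> ('a \<Rightarrow> 'a \<Rightarrow> 'k::field) \<Rightarrow> bool" where
  "finitary P \<alpha> \<longleftrightarrow> (\<forall>x\<in>P. \<forall>y\<in>P. x < y \<longrightarrow>
      finite {(u, v). u \<in> P \<and> v \<in> P \<and> x \<le> u \<and> u < v \<and> v \<le> y \<and> \<alpha> u v \<noteq> 0})"

definition FI :: "'a::order set \<Rightarrow> ('a \<Rightarrow> 'a \<Rightarrow> 'k::field) set" where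
  "FI P = {\<alpha> \<in> incidence P. finitary P \<alpha>}"

text \<open>Convolution; for finitary series the index set of nonzero terms is finite.\<close>
definition conv :: "'a::order set \<Rightarrow> ('a \<Rightarrow> 'a \<Rightarrow> 'k::field) \<Rightarrow> ('a \<Rightarrow> 'a \<Rightarrow> 'k) \<Rightarrow> ('a \<Rightarrow> 'a \<Rightarrow> 'k)" where
  "conv P \<alpha> \<beta> = (\<lambda>x y. if x \<in> P \<and> y \<in> P \<and> x \<le> y then
      (\<Sum>z \<in> {z \<in> P. x \<le> z \<and> z \<le> y \<and> \<alpha> x z * \<beta> z y \<noteq> 0}. \<alpha> x z * \<beta> z y) else 0)"

definition delta :: "'a::order set \<Rightarrow> ('a \<Rightarrow> 'a \<Rightarrow> 'k::field)" where
  "delta P = (\<lambda>x y. if x \<in> P \<and> x = y then 1 else 0)"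

definition FI_ring :: "'a::order set \<Rightarrow> ('a \<Rightarrow> 'a \<Rightarrow> 'k::field) ring" where
  "FI_ring P = \<lparr>carrier = FI P, mult = conv P, one = delta P,
                zero = (\<lambda>x y. 0), add = (\<lambda>\<alpha> \<beta> x y. \<alpha> x y + \<beta> x y)\<rparr>"

definition left_ideal :: "'b set \<Rightarrow> ('b, 'c) ring_scheme \<Rightarrow> bool" where
  "left_ideal I R \<longleftrightarrow> additive_subgroup I R \<and>
     (\<forall>a \<in> carrier R. \<forall>x \<in> I. a \<otimes>\<^bsub>R\<^esub> x \<in> I)"

definition maximal_left_ideal :: "'b set \<Rightarrow> ('b, 'c) ring_scheme \<Rightarrow> bool" where
  "maximal_left_ideal I R \<longleftrightarrow> left_ideal I R \<and> I \<noteq> carrier R \<and>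
     (\<forall>J. left_ideal J R \<and> I \<subseteq> J \<and> J \<noteq> carrier R \<longrightarrow> J = I)"

definition jacobson_radical :: "('b, 'c) ring_scheme \<Rightarrow> 'b set" where
  "jacobson_radical R = carrier R \<inter> \<Inter> {I. maximal_left_ideal I R}"

end

theory Submission
  imports Defs
begin

text \<open>
  Idea: a commutator \<alpha>\<beta> - \<beta>\<alpha> vanishes on the diagonal, because the diagonal of a
  convolution is the pointwise product of the diagonals.  Every series \<nu> with zero diagonal
  lies in every maximal left ideal M: the zero-diagonal series form a left ideal Z, and if
  M + Z were the whole algebra we could write \<delta> = m + \<nu> with m \<in> M, \<nu> \<in> Z; but \<delta> - \<nu>
  has the left inverse \<Sum>\<nu>^k (finitely many nonzero terms at each pair x \<le> y,
  since \<nu> is finitary with zero diagonal), so M would contain \<delta> and hence everything.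
  Thus all commutators lie in the radical, and multiplication of cosets commutes.
\<close>

lemma jacobson_radical_additive_subgroup:
  fixes R (structure)
  assumes "abelian_group R"
  shows "additive_subgroup (jacobson_radical R) R"
proof -
  interpret abelian_group R by fact
  have sub: "additive_subgroup M R" if "maximal_left_ideal M R" for M
    using that unfolding maximal_left_ideal_def left_ideal_def by blast
  show ?thesis
  proof (rule additive_subgroup.intro, rule add.subgroupI)
    show "jacobson_radical R \<subseteq> carrier R"
      unfolding jacobson_radical_def by auto
    show "jacobson_radical R \<noteq> {}"
      using additive_subgroup.zero_closed[OF sub] unfolding jacobson_radical_def by blast
    show "\<ominus> a \<in> jacobson_radical R" if "a \<in> jacobson_radical R" for a
      using that additive_subgroup.a_inv_closed[OF sub] unfolding jacobson_radical_def by auto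
    show "a \<oplus> b \<in> jacobson_radical R" if "a \<in> jacobson_radical R" "b \<in> jacobson_radical R" for a b
      using that additive_subgroup.a_closed[OF sub] unfolding jacobson_radical_def by auto
  qed
qed

lemma left_ideal_set_add:
  fixes R (structure)
  assumes "abelian_group R"
    and distrib: "\<And>a x y. a \<in> carrier R \<Longrightarrow> x \<in> carrier R \<Longrightarrow> y \<in> carrier R \<Longrightarrow>
                   a \<otimes>\<^bsub>R\<^esub> (x \<oplus>\<^bsub>R\<^esub> y) = a \<otimes>\<^bsub>R\<^esub> x \<oplus>\<^bsub>R\<^esub> a \<otimes>\<^bsub>R\<^esub> y"
    and I: "left_ideal I R" and J: "left_ideal J R"
  shows "left_ideal (I <+>\<^bsub>R\<^esub> J) R"
  unfolding left_ideal_def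
proof (intro conjI ballI)
  interpret abelian_group R by fact
  have I_sub: "additive_subgroup I R" and J_sub: "additive_subgroup J R"
    using I J unfolding left_ideal_def by auto
  show "additive_subgroup (I <+>\<^bsub>R\<^esub> J) R"
    by (rule add_additive_subgroups[OF I_sub J_sub])
  fix a x assume a: "a \<in> carrier R" and "x \<in> I <+>\<^bsub>R\<^esub> J"
  then obtain i j where ij: "i \<in> I" "j \<in> J" "x = i \<oplus> j"
    unfolding set_add_def' by blast
  have "a \<otimes> x = a \<otimes> i \<oplus> a \<otimes> j"
    using ij a distrib additive_subgroup.a_Hcarr[OF I_sub] additive_subgroup.a_Hcarr[OF J_sub] by simp
  moreover have "a \<otimes> i \<in> I" "a \<otimes> j \<in> J" using I J a ij unfolding left_ideal_def by auto
  ultimately show "a \<otimes> x \<in> I <+>\<^bsub>R\<^esub> J" unfolding set_add_def' by blast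
qed

lemma maximal_left_ideal_absorbs:
  fixes R (structure)
  assumes R: "abelian_group R"
    and distrib: "\<And>a x y. a \<in> carrier R \<Longrightarrow> x \<in> carrier R \<Longrightarrow> y \<in> carrier R \<Longrightarrow>
                   a \<otimes>\<^bsub>R\<^esub> (x \<oplus>\<^bsub>R\<^esub> y) = a \<otimes>\<^bsub>R\<^esub> x \<oplus>\<^bsub>R\<^esub> a \<otimes>\<^bsub>R\<^esub> y"
    and M: "maximal_left_ideal M R" and N: "left_ideal N R"
    and proper: "M <+>\<^bsub>R\<^esub> N \<noteq> carrier R"
  shows "N \<subseteq> M"
proof -
  interpret abelian_group R by fact
  have M_sub: "additive_subgroup M R" and N_sub: "additive_subgroup N R"
    using M N unfolding maximal_left_ideal_def left_ideal_def by auto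
  have "M \<subseteq> M <+>\<^bsub>R\<^esub> N"
  proof
    fix m assume "m \<in> M"
    then have "m = m \<oplus> \<zero>" "\<zero> \<in> N"
      using additive_subgroup.a_Hcarr[OF M_sub] additive_subgroup.zero_closed[OF N_sub] by auto
    with \<open>m \<in> M\<close> show "m \<in> M <+>\<^bsub>R\<^esub> N" unfolding set_add_def' by blast
  qed
  moreover have "N \<subseteq> M <+>\<^bsub>R\<^esub> N"
  proof
    fix n assume "n \<in> N"
    then have "n = \<zero> \<oplus> n" "\<zero> \<in> M"
      using additive_subgroup.a_Hcarr[OF N_sub] additive_subgroup.zero_closed[OF M_sub] by auto
    with \<open>n \<in> N\<close> show "n \<in> M <+>\<^bsub>R\<^esub> N" unfolding set_add_def' by blast
  qed
  moreover have "left_ideal (M <+>\<^bsub>R\<^esub> N) R"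
    using left_ideal_set_add[OF R distrib] M N unfolding maximal_left_ideal_def by blast
  ultimately have "M <+>\<^bsub>R\<^esub> N = M"
    using M proper unfolding maximal_left_ideal_def by blast
  then show ?thesis using \<open>N \<subseteq> M <+>\<^bsub>R\<^esub> N\<close> by simp
qed

lemma left_ideal_left_invertible:
  assumes "left_ideal M R" and "m \<in> M" and "t \<in> carrier R" and "t \<otimes>\<^bsub>R\<^esub> m = \<one>\<^bsub>R\<^esub>"
    and r_one: "\<And>a. a \<in> carrier R \<Longrightarrow> a \<otimes>\<^bsub>R\<^esub> \<one>\<^bsub>R\<^esub> = a"
  shows "carrier R \<subseteq> M"
proof
  fix a assume a: "a \<in> carrier R"
  have "\<one>\<^bsub>R\<^esub> \<in> M" using assms(1-4) unfolding left_ideal_def by metis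
  then show "a \<in> M" using a assms(1) r_one[OF a] unfolding left_ideal_def by metis
qed

lemma quotient_mult_commute:
  fixes R (structure)
  assumes R: "abelian_group R" and J: "additive_subgroup J R"
    and mult_closed: "\<And>a b. a \<in> carrier R \<Longrightarrow> b \<in> carrier R \<Longrightarrow> a \<otimes>\<^bsub>R\<^esub> b \<in> carrier R"
    and comm: "\<And>a b. a \<in> carrier R \<Longrightarrow> b \<in> carrier R \<Longrightarrow> a \<otimes>\<^bsub>R\<^esub> b \<ominus>\<^bsub>R\<^esub> b \<otimes>\<^bsub>R\<^esub> a \<in> J"
  shows "\<forall>X \<in> carrier (R Quot J). \<forall>Y \<in> carrier (R Quot J).
           X \<otimes>\<^bsub>R Quot J\<^esub> Y = Y \<otimes>\<^bsub>R Quot J\<^esub> X"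
proof (intro ballI)
  interpret abelian_subgroup J R by (rule abelian_subgroupI3[OF J R])
  have coset_eq: "J +> (a \<otimes> b) = J +> (b \<otimes> a)" if "a \<in> carrier R" "b \<in> carrier R" for a b
  proof -
    have "a \<otimes> b \<oplus> \<ominus> (b \<otimes> a) \<in> J"
      using comm[OF that] unfolding a_minus_def .
    then have "a \<otimes> b \<in> J +> (b \<otimes> a)"
      by (intro a_rcos_module_rev mult_closed that)
    then show ?thesis
      by (intro a_repr_independence'[symmetric] mult_closed that)
  qed
  fix X Y assume X: "X \<in> carrier (R Quot J)" and Y: "Y \<in> carrier (R Quot J)"
  have X_sub: "X \<subseteq> carrier R" and Y_sub: "Y \<subseteq> carrier R"
    using a_rcosets_carrier X Y unfolding FactRing_def by simp_all
  have "X \<otimes>\<^bsub>R Quot J\<^esub> Y = (\<Union>a\<in>X. \<Union>b\<in>Y. J +> (a \<otimes> b))"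
    unfolding FactRing_def rcoset_mult_def by simp
  also have "\<dots> = (\<Union>a\<in>X. \<Union>b\<in>Y. J +> (b \<otimes> a))"
    using X_sub Y_sub by (intro SUP_cong refl) (simp add: coset_eq subsetD)
  also have "\<dots> = (\<Union>b\<in>Y. \<Union>a\<in>X. J +> (b \<otimes> a))"
    by (rule SUP_commute)
  also have "\<dots> = Y \<otimes>\<^bsub>R Quot J\<^esub> X"
    unfolding FactRing_def rcoset_mult_def by simp
  finally show "X \<otimes>\<^bsub>R Quot J\<^esub> Y = Y \<otimes>\<^bsub>R Quot J\<^esub> X" .
qed

definition nz_pairs :: "'a::order set \<Rightarrow> ('a \<Rightarrow> 'a \<Rightarrow> 'k::field) \<Rightarrow> 'a \<Rightarrow> 'a \<Rightarrow> ('a \<times> 'a) set" where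
  "nz_pairs P \<alpha> x y = {(u, v). u \<in> P \<and> v \<in> P \<and> x \<le> u \<and> u < v \<and> v \<le> y \<and> \<alpha> u v \<noteq> 0}"

lemma finitary_nz_pairs:
  "finitary P \<alpha> \<longleftrightarrow> (\<forall>x\<in>P. \<forall>y\<in>P. x < y \<longrightarrow> finite (nz_pairs P \<alpha> x y))"
  unfolding finitary_def nz_pairs_def ..

lemma finite_nz_pairs:
  assumes "finitary P \<alpha>" "x \<in> P" "y \<in> P"
  shows "finite (nz_pairs P \<alpha> x y)"
proof (cases "x < y")
  case True
  then show ?thesis using assms unfolding finitary_nz_pairs by blast
next
  case False
  then have "nz_pairs P \<alpha> x y = {}"
    unfolding nz_pairs_def using order.strict_trans1 order.strict_trans2 by fastforce
  then show ?thesis by simp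
qed

lemma nz_pairs_mono: "x \<le> x' \<Longrightarrow> y' \<le> y \<Longrightarrow> nz_pairs P \<alpha> x' y' \<subseteq> nz_pairs P \<alpha> x y"
  unfolding nz_pairs_def by (auto intro: order_trans)

lemma incidenceD: "\<alpha> \<in> incidence P \<Longrightarrow> \<alpha> x y \<noteq> 0 \<Longrightarrow> x \<in> P \<and> y \<in> P \<and> x \<le> y"
  unfolding incidence_def by blast

lemma left_support_finite:
  assumes "finitary P \<alpha>" "x \<in> P" "y \<in> P"
  shows "finite {z \<in> P. x \<le> z \<and> z \<le> y \<and> \<alpha> x z \<noteq> 0}"
proof (rule finite_subset)
  show "{z \<in> P. x \<le> z \<and> z \<le> y \<and> \<alpha> x z \<noteq> 0} \<subseteq> insert x (snd ` nz_pairs P \<alpha> x y)"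
    using assms(2) unfolding nz_pairs_def by (force simp: order.order_iff_strict)
  show "finite (insert x (snd ` nz_pairs P \<alpha> x y))"
    using finite_nz_pairs[OF assms] by simp
qed

lemma right_support_finite:
  assumes "finitary P \<beta>" "x \<in> P" "y \<in> P"
  shows "finite {z \<in> P. x \<le> z \<and> z \<le> y \<and> \<beta> z y \<noteq> 0}"
proof (rule finite_subset)
  show "{z \<in> P. x \<le> z \<and> z \<le> y \<and> \<beta> z y \<noteq> 0} \<subseteq> insert y (fst ` nz_pairs P \<beta> x y)"
    using assms(3) unfolding nz_pairs_def by (force simp: order.order_iff_strict)
  show "finite (insert y (fst ` nz_pairs P \<beta> x y))"
    using finite_nz_pairs[OF assms] by simp
qed

lemma conv_eq_sum:
  assumes "finite F" "F \<subseteq> {z \<in> P. x \<le> z \<and> z \<le> y}"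
    and "\<And>z. z \<in> P \<Longrightarrow> x \<le> z \<Longrightarrow> z \<le> y \<Longrightarrow> \<alpha> x z * \<beta> z y \<noteq> 0 \<Longrightarrow> z \<in> F"
    and "x \<in> P" "y \<in> P" "x \<le> y"
  shows "conv P \<alpha> \<beta> x y = (\<Sum>z \<in> F. \<alpha> x z * \<beta> z y)"
proof -
  have "conv P \<alpha> \<beta> x y = (\<Sum>z \<in> {z \<in> P. x \<le> z \<and> z \<le> y \<and> \<alpha> x z * \<beta> z y \<noteq> 0}. \<alpha> x z * \<beta> z y)"
    using assms(4-6) unfolding conv_def by simp
  also have "\<dots> = (\<Sum>z \<in> F. \<alpha> x z * \<beta> z y)"
    using assms(1-3) by (intro sum.mono_neutral_left) auto
  finally show ?thesis .
qed

lemma conv_left_support: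
  assumes "finitary P \<alpha>" "x \<in> P" "y \<in> P" "x \<le> y"
  shows "conv P \<alpha> \<beta> x y = (\<Sum>z \<in> {z \<in> P. x \<le> z \<and> z \<le> y \<and> \<alpha> x z \<noteq> 0}. \<alpha> x z * \<beta> z y)"
  using left_support_finite[OF assms(1-3)] assms(2-4) by (intro conv_eq_sum) auto

lemma conv_right_support:
  assumes "finitary P \<beta>" "x \<in> P" "y \<in> P" "x \<le> y"
  shows "conv P \<alpha> \<beta> x y = (\<Sum>z \<in> {z \<in> P. x \<le> z \<and> z \<le> y \<and> \<beta> z y \<noteq> 0}. \<alpha> x z * \<beta> z y)"
  using right_support_finite[OF assms(1-3)] assms(2-4) by (intro conv_eq_sum) auto

lemma conv_outside: "\<not> (x \<in> P \<and> y \<in> P \<and> x \<le> y) \<Longrightarrow> conv P \<alpha> \<beta> x y = 0"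
  unfolding conv_def by auto

lemma conv_diag: "x \<in> P \<Longrightarrow> conv P \<alpha> \<beta> x x = \<alpha> x x * \<beta> x x"
  by (rule conv_eq_sum[where F = "{x}", simplified]) (auto intro: order.antisym)

lemma conv_nonzero:
  assumes "conv P \<alpha> \<beta> x y \<noteq> 0"
  shows "x \<in> P \<and> y \<in> P \<and> x \<le> y \<and> (\<exists>z \<in> P. x \<le> z \<and> z \<le> y \<and> \<alpha> x z \<noteq> 0 \<and> \<beta> z y \<noteq> 0)"
proof -
  have xy: "x \<in> P \<and> y \<in> P \<and> x \<le> y" using assms conv_outside by blast
  then have "(\<Sum>z \<in> {z \<in> P. x \<le> z \<and> z \<le> y \<and> \<alpha> x z * \<beta> z y \<noteq> 0}. \<alpha> x z * \<beta> z y) \<noteq> 0"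
    using assms unfolding conv_def by simp
  then obtain z where "z \<in> {z \<in> P. x \<le> z \<and> z \<le> y \<and> \<alpha> x z * \<beta> z y \<noteq> 0}"
    by (rule sum.not_neutral_contains_not_neutral)
  then show ?thesis using xy by auto
qed

lemma conv_incidence: "conv P \<alpha> \<beta> \<in> incidence P"
  unfolding incidence_def conv_def by auto

text \<open>Convolution preserves finitarity: a nonzero pair of \<alpha>\<beta> in [x, y] is a nonzero pair of
  \<alpha> or of \<beta>, or it is built from the endpoints of such pairs.\<close>
lemma conv_finitary:
  assumes "finitary P \<alpha>" "finitary P \<beta>"
  shows "finitary P (conv P \<alpha> \<beta>)"
  unfolding finitary_nz_pairs
proof (intro ballI impI)
  fix x y assume xy: "x \<in> P" "y \<in> P" "x < y"
  let ?A = "nz_pairs P \<alpha> x y" and ?B = "nz_pairs P \<beta> x y"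
  have "nz_pairs P (conv P \<alpha> \<beta>) x y \<subseteq> ?A \<union> ?B \<union> fst ` ?A \<times> snd ` ?B"
  proof
    fix p assume "p \<in> nz_pairs P (conv P \<alpha> \<beta>) x y"
    then obtain u v where p: "p = (u, v)" "x \<le> u" "u < v" "v \<le> y" "conv P \<alpha> \<beta> u v \<noteq> 0"
      unfolding nz_pairs_def by blast
    then obtain z where z: "z \<in> P" "u \<le> z" "z \<le> v" "\<alpha> u z \<noteq> 0" "\<beta> z v \<noteq> 0"
      and uv: "u \<in> P" "v \<in> P" using conv_nonzero by metis
    consider "z = u" | "z = v" | "u < z" "z < v"
      using z(2,3) by (metis order.order_iff_strict)
    then show "p \<in> ?A \<union> ?B \<union> fst ` ?A \<times> snd ` ?B"
    proof cases
      case 1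
      then have "(u, v) \<in> ?B" using p uv z unfolding nz_pairs_def by auto
      then show ?thesis using p by auto
    next
      case 2
      then have "(u, v) \<in> ?A" using p uv z unfolding nz_pairs_def by auto
      then show ?thesis using p by auto
    next
      case 3
      then have "(u, z) \<in> ?A" "(z, v) \<in> ?B"
        using p uv z unfolding nz_pairs_def by (auto intro: order_trans)
      then show ?thesis using p by force
    qed
  qed
  moreover have "finite (?A \<union> ?B \<union> fst ` ?A \<times> snd ` ?B)"
    using finite_nz_pairs assms xy by auto
  ultimately show "finite (nz_pairs P (conv P \<alpha> \<beta>) x y)" by (rule finite_subset)
qed

lemma conv_FI: "\<alpha> \<in> FI P \<Longrightarrow> \<beta> \<in> FI P \<Longrightarrow> conv P \<alpha> \<beta> \<in> FI P"
  unfolding FI_def by (simp add: conv_incidence conv_finitary)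

lemma add_FI:
  assumes "\<alpha> \<in> FI P" "\<beta> \<in> FI P"
  shows "(\<lambda>x y. \<alpha> x y + \<beta> x y) \<in> FI P"
proof -
  have "(\<lambda>x y. \<alpha> x y + \<beta> x y) \<in> incidence P"
    unfolding incidence_def
  proof (intro CollectI allI impI)
    fix x y assume "\<alpha> x y + \<beta> x y \<noteq> 0"
    then have "\<alpha> x y \<noteq> 0 \<or> \<beta> x y \<noteq> 0" by auto
    then show "x \<in> P \<and> y \<in> P \<and> x \<le> y" using assms incidenceD unfolding FI_def by blast
  qed
  moreover have "finitary P (\<lambda>x y. \<alpha> x y + \<beta> x y)"
    unfolding finitary_nz_pairs
  proof (intro ballI impI)
    fix x y assume "x \<in> P" "y \<in> P"
    have "nz_pairs P (\<lambda>x y. \<alpha> x y + \<beta> x y) x y \<subseteq> nz_pairs P \<alpha> x y \<union> nz_pairs P \<beta> x y"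
      unfolding nz_pairs_def by auto
    moreover have "finite (nz_pairs P \<alpha> x y \<union> nz_pairs P \<beta> x y)"
      using assms \<open>x \<in> P\<close> \<open>y \<in> P\<close> unfolding FI_def by (auto intro: finite_nz_pairs)
    ultimately show "finite (nz_pairs P (\<lambda>x y. \<alpha> x y + \<beta> x y) x y)" by (rule finite_subset)
  qed
  ultimately show ?thesis unfolding FI_def by simp
qed

lemma neg_FI: "\<alpha> \<in> FI P \<Longrightarrow> (\<lambda>x y. - \<alpha> x y) \<in> FI P"
  unfolding FI_def incidence_def finitary_def by auto

lemma zero_FI: "(\<lambda>x y. 0) \<in> FI P"
  unfolding FI_def incidence_def finitary_def by auto

lemma delta_FI: "delta P \<in> FI P"
proof -
  have "finitary P (delta P)"
    unfolding finitary_def by (auto intro: finite_subset[of _ "{}"] simp: delta_def)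
  moreover have "delta P \<in> incidence P" unfolding incidence_def delta_def by auto
  ultimately show ?thesis unfolding FI_def by simp
qed

lemma FI_ring_simps [simp]:
  "carrier (FI_ring P) = FI P" "mult (FI_ring P) = conv P" "one (FI_ring P) = delta P"
  "zero (FI_ring P) = (\<lambda>x y. 0)" "add (FI_ring P) = (\<lambda>\<alpha> \<beta> x y. \<alpha> x y + \<beta> x y)"
  by (simp_all add: FI_ring_def)

lemma FI_ring_abelian_group:
  fixes P :: "'a::order set"
  shows "abelian_group (FI_ring P :: ('a \<Rightarrow> 'a \<Rightarrow> 'k::field) ring)"
proof (rule abelian_groupI)
  show "\<exists>\<beta> \<in> carrier (FI_ring P). \<beta> \<oplus>\<^bsub>FI_ring P\<^esub> \<alpha> = \<zero>\<^bsub>FI_ring P\<^esub>"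
    if "\<alpha> \<in> carrier (FI_ring P)" for \<alpha> :: "'a \<Rightarrow> 'a \<Rightarrow> 'k"
    using that by (intro bexI[of _ "\<lambda>x y. - \<alpha> x y"]) (simp_all add: neg_FI)
qed (simp_all add: add_FI zero_FI algebra_simps)

lemma FI_ring_a_inv:
  assumes "\<beta> \<in> FI P"
  shows "\<ominus>\<^bsub>FI_ring P\<^esub> \<beta> = (\<lambda>x y. - \<beta> x y)"
  by (rule abelian_group.minus_equality[OF FI_ring_abelian_group]) (simp_all add: assms neg_FI)

lemma FI_ring_a_minus:
  assumes "\<alpha> \<in> FI P" "\<beta> \<in> FI P"
  shows "\<alpha> \<ominus>\<^bsub>FI_ring P\<^esub> \<beta> = (\<lambda>x y. \<alpha> x y - \<beta> x y)"
  using assms by (simp add: a_minus_def FI_ring_a_inv)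

lemma conv_add_right:
  assumes "finitary P \<alpha>"
  shows "conv P \<alpha> (\<lambda>x y. \<beta> x y + \<gamma> x y) = (\<lambda>x y. conv P \<alpha> \<beta> x y + conv P \<alpha> \<gamma> x y)"
proof (intro ext)
  fix x y
  show "conv P \<alpha> (\<lambda>x y. \<beta> x y + \<gamma> x y) x y = conv P \<alpha> \<beta> x y + conv P \<alpha> \<gamma> x y"
    by (cases "x \<in> P \<and> y \<in> P \<and> x \<le> y")
      (simp_all add: conv_left_support[OF assms] distrib_left sum.distrib conv_outside)
qed

lemma conv_diff_right:
  assumes "finitary P \<alpha>"
  shows "conv P \<alpha> (\<lambda>x y. \<beta> x y - \<gamma> x y) = (\<lambda>x y. conv P \<alpha> \<beta> x y - conv P \<alpha> \<gamma> x y)"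
proof (intro ext)
  fix x y
  show "conv P \<alpha> (\<lambda>x y. \<beta> x y - \<gamma> x y) x y = conv P \<alpha> \<beta> x y - conv P \<alpha> \<gamma> x y"
    by (cases "x \<in> P \<and> y \<in> P \<and> x \<le> y")
      (simp_all add: conv_left_support[OF assms] right_diff_distrib sum_subtractf conv_outside)
qed

lemma conv_delta_right:
  assumes "\<alpha> \<in> incidence P"
  shows "conv P \<alpha> (delta P) = \<alpha>"
proof (intro ext)
  fix x y
  show "conv P \<alpha> (delta P) x y = \<alpha> x y"
  proof (cases "x \<in> P \<and> y \<in> P \<and> x \<le> y")
    case True
    then have "conv P \<alpha> (delta P) x y = (\<Sum>z \<in> {y}. \<alpha> x z * delta P z y)"
      by (intro conv_eq_sum) (auto simp: delta_def split: if_splits)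
    then show ?thesis using True by (simp add: delta_def)
  next
    case False
    then show ?thesis using incidenceD[OF assms] conv_outside by metis
  qed
qed

text \<open>Powers of a series with respect to convolution; FI_geom is the geometric series
  \<Sum>\<nu>^k, truncated at each pair (x, y) where the omitted terms vanish.\<close>
abbreviation FI_pow :: "'a::order set \<Rightarrow> ('a \<Rightarrow> 'a \<Rightarrow> 'k::field) \<Rightarrow> nat \<Rightarrow> ('a \<Rightarrow> 'a \<Rightarrow> 'k)" where
  "FI_pow P \<nu> k \<equiv> \<nu> [^]\<^bsub>FI_ring P\<^esub> k"

lemma FI_pow_0: "FI_pow P \<nu> 0 = delta P"
  by simp

lemma FI_pow_Suc: "FI_pow P \<nu> (Suc k) = conv P (FI_pow P \<nu> k) \<nu>"
  by simp

lemma FI_pow_incidence: "FI_pow P \<nu> k \<in> incidence P"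
proof (cases k)
  case 0
  then show ?thesis by (simp add: incidence_def delta_def)
next
  case (Suc j)
  then show ?thesis by (simp add: conv_incidence)
qed

definition FI_geom :: "'a::order set \<Rightarrow> ('a \<Rightarrow> 'a \<Rightarrow> 'k::field) \<Rightarrow> ('a \<Rightarrow> 'a \<Rightarrow> 'k)" where
  "FI_geom P \<nu> x y = (\<Sum>k < Suc (card (nz_pairs P \<nu> x y)). FI_pow P \<nu> k x y)"

context
  fixes P :: "'a::order set" and \<nu> :: "'a \<Rightarrow> 'a \<Rightarrow> 'k::field"
  assumes \<nu>_FI: "\<nu> \<in> FI P" and \<nu>_diag: "\<And>x. \<nu> x x = 0"
begin

lemma \<nu>_finitary: "finitary P \<nu>"
  using \<nu>_FI unfolding FI_def by simp

lemma \<nu>_nonzero: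
  assumes "\<nu> u v \<noteq> 0"
  shows "u \<in> P \<and> v \<in> P \<and> u < v"
proof -
  have "u \<in> P \<and> v \<in> P \<and> u \<le> v" using \<nu>_FI incidenceD assms unfolding FI_def by blast
  moreover have "u \<noteq> v" using \<nu>_diag assms by auto
  ultimately show ?thesis by auto
qed

text \<open>Nilpotency: a nonzero entry of \<nu>^k at (x, y) is a chain of k nonzero strict steps of \<nu> inside
  [x, y], so k is at most the number of nonzero pairs of \<nu> in that interval.\<close>
lemma FI_pow_nonzero_length: "FI_pow P \<nu> k x y \<noteq> 0 \<Longrightarrow> k \<le> card (nz_pairs P \<nu> x y)"
proof (induction k arbitrary: y)
  case 0
  then show ?case by simp
next
  case (Suc k)
  then have "conv P (FI_pow P \<nu> k) \<nu> x y \<noteq> 0" by simp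
  then obtain z where xy: "x \<in> P" "y \<in> P" and z: "z \<in> P" "x \<le> z" "z \<le> y"
    and pow: "FI_pow P \<nu> k x z \<noteq> 0" and step: "\<nu> z y \<noteq> 0"
    using conv_nonzero by metis
  have "z < y" using \<nu>_nonzero[OF step] by simp
  have "nz_pairs P \<nu> x z \<subset> nz_pairs P \<nu> x y"
  proof
    show "nz_pairs P \<nu> x z \<subseteq> nz_pairs P \<nu> x y" using nz_pairs_mono z by blast
    have "(z, y) \<in> nz_pairs P \<nu> x y" "(z, y) \<notin> nz_pairs P \<nu> x z"
      using z xy step \<open>z < y\<close> unfolding nz_pairs_def by auto
    then show "nz_pairs P \<nu> x z \<noteq> nz_pairs P \<nu> x y" by blast
  qed
  then have "card (nz_pairs P \<nu> x z) < card (nz_pairs P \<nu> x y)"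
    by (rule psubset_card_mono[OF finite_nz_pairs[OF \<nu>_finitary xy]])
  then show ?case using Suc.IH[OF pow] by simp
qed

lemma FI_pow_first_step: "FI_pow P \<nu> (Suc k) u v \<noteq> 0 \<Longrightarrow> \<exists>w. \<nu> u w \<noteq> 0 \<and> w \<le> v"
proof (induction k arbitrary: v)
  case 0
  then have "conv P (delta P) \<nu> u v \<noteq> 0" by simp
  from conv_nonzero[OF this] obtain z where "(delta P u z :: 'k) \<noteq> 0" "\<nu> z v \<noteq> 0" by blast
  then show ?case by (auto simp: delta_def split: if_splits)
next
  case (Suc k)
  from Suc.prems have "conv P (FI_pow P \<nu> (Suc k)) \<nu> u v \<noteq> 0"
    by (subst (asm) FI_pow_Suc) assumption
  from conv_nonzero[OF this] obtain z where "z \<le> v" "FI_pow P \<nu> (Suc k) u z \<noteq> 0" by blast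
  with Suc.IH obtain w where "\<nu> u w \<noteq> 0" "w \<le> z" by blast
  with \<open>z \<le> v\<close> show ?case by (blast intro: order_trans)
qed

lemma FI_pow_vanishes: "card (nz_pairs P \<nu> x y) < k \<Longrightarrow> FI_pow P \<nu> k x y = 0"
  using FI_pow_nonzero_length by (meson not_le)

lemma FI_geom_truncate:
  assumes "x \<in> P" "y \<in> P" "x \<le> z" "z \<le> y"
  shows "FI_geom P \<nu> x z = (\<Sum>k < Suc (card (nz_pairs P \<nu> x y)). FI_pow P \<nu> k x z)"
proof -
  have "card (nz_pairs P \<nu> x z) \<le> card (nz_pairs P \<nu> x y)"
    using assms by (intro card_mono finite_nz_pairs \<nu>_finitary nz_pairs_mono) auto
  then show ?thesis unfolding FI_geom_def
    by (intro sum.mono_neutral_left) (auto intro: FI_pow_vanishes)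
qed

lemma FI_geom_incidence: "FI_geom P \<nu> \<in> incidence P"
  unfolding incidence_def
proof (intro CollectI allI impI)
  fix x y assume "FI_geom P \<nu> x y \<noteq> 0"
  then obtain k where "FI_pow P \<nu> k x y \<noteq> 0"
    unfolding FI_geom_def by (meson sum.not_neutral_contains_not_neutral)
  then show "x \<in> P \<and> y \<in> P \<and> x \<le> y" using FI_pow_incidence incidenceD by metis
qed

text \<open>The geometric series is finitary: its nonzero pairs in [x, y] are built from the
  endpoints of the finitely many nonzero pairs of \<nu> there.\<close>
lemma FI_geom_finitary: "finitary P (FI_geom P \<nu>)"
  unfolding finitary_nz_pairs
proof (intro ballI impI)
  fix x y assume xy: "x \<in> P" "y \<in> P"
  let ?S = "nz_pairs P \<nu> x y"
  have "nz_pairs P (FI_geom P \<nu>) x y \<subseteq> fst ` ?S \<times> snd ` ?S"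
  proof
    fix p assume "p \<in> nz_pairs P (FI_geom P \<nu>) x y"
    then obtain u v where p: "p = (u, v)" "x \<le> u" "u < v" "v \<le> y" "FI_geom P \<nu> u v \<noteq> 0"
      unfolding nz_pairs_def by blast
    then obtain k where k: "FI_pow P \<nu> k u v \<noteq> 0"
      unfolding FI_geom_def by (meson sum.not_neutral_contains_not_neutral)
    have "k \<noteq> 0"
    proof
      assume "k = 0"
      with k have "(delta P u v :: 'k) \<noteq> 0" by simp
      with \<open>u < v\<close> show False by (simp add: delta_def split: if_splits)
    qed
    then obtain j where j: "k = Suc j" by (cases k) auto
    from FI_pow_first_step k j obtain w where w: "\<nu> u w \<noteq> 0" "w \<le> v" by blast
    then have "(u, w) \<in> ?S"
      using \<nu>_nonzero p unfolding nz_pairs_def by (auto intro: order_trans)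
    moreover have "conv P (FI_pow P \<nu> j) \<nu> u v \<noteq> 0" using k j by simp
    from conv_nonzero[OF this] obtain z where "z \<in> P" "u \<le> z" "\<nu> z v \<noteq> 0" by blast
    then have "(z, v) \<in> ?S"
      using \<nu>_nonzero p unfolding nz_pairs_def by (auto intro: order_trans)
    ultimately show "p \<in> fst ` ?S \<times> snd ` ?S" using p by force
  qed
  moreover have "finite (fst ` ?S \<times> snd ` ?S)"
    using finite_nz_pairs[OF \<nu>_finitary xy] by simp
  ultimately show "finite (nz_pairs P (FI_geom P \<nu>) x y)" by (rule finite_subset)
qed

lemma FI_geom_FI: "FI_geom P \<nu> \<in> FI P"
  unfolding FI_def using FI_geom_incidence FI_geom_finitary by simp

lemma FI_geom_mult_nu: "conv P (FI_geom P \<nu>) \<nu> = (\<lambda>x y. FI_geom P \<nu> x y - delta P x y)"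
proof (intro ext)
  fix x y
  show "conv P (FI_geom P \<nu>) \<nu> x y = FI_geom P \<nu> x y - delta P x y"
  proof (cases "x \<in> P \<and> y \<in> P \<and> x \<le> y")
    case True
    then have xy: "x \<in> P" "y \<in> P" "x \<le> y" by auto
    define N where "N = Suc (card (nz_pairs P \<nu> x y))"
    let ?F = "{z \<in> P. x \<le> z \<and> z \<le> y \<and> \<nu> z y \<noteq> 0}"
    note conv_F = conv_right_support[OF \<nu>_finitary xy]
    have vanish: "FI_pow P \<nu> N x y = 0"
      by (rule FI_pow_vanishes) (simp add: N_def)
    have "conv P (FI_geom P \<nu>) \<nu> x y = (\<Sum>z \<in> ?F. \<Sum>k < N. FI_pow P \<nu> k x z * \<nu> z y)"
      unfolding conv_F
    proof (rule sum.cong[OF refl])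
      fix z assume "z \<in> ?F"
      then have "x \<le> z" "z \<le> y" by auto
      show "FI_geom P \<nu> x z * \<nu> z y = (\<Sum>k < N. FI_pow P \<nu> k x z * \<nu> z y)"
        unfolding N_def FI_geom_truncate[OF xy(1,2) \<open>x \<le> z\<close> \<open>z \<le> y\<close>]
        by (rule sum_distrib_right)
    qed
    also have "\<dots> = (\<Sum>k < N. \<Sum>z \<in> ?F. FI_pow P \<nu> k x z * \<nu> z y)"
      by (rule sum.swap)
    also have "\<dots> = (\<Sum>k < N. FI_pow P \<nu> (Suc k) x y)"
      by (simp add: conv_F)
    also have "\<dots> = (\<Sum>k < Suc N. FI_pow P \<nu> k x y) - delta P x y"
      by (simp only: sum.lessThan_Suc_shift FI_pow_0 add_diff_cancel_left')
    also have "(\<Sum>k < Suc N. FI_pow P \<nu> k x y) = FI_geom P \<nu> x y"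
      using vanish unfolding FI_geom_def N_def[symmetric] by (simp only: sum.lessThan_Suc add_0_right)
    finally show ?thesis .
  next
    case False
    have "FI_geom P \<nu> x y = 0" using False incidenceD[OF FI_geom_incidence] by blast
    moreover have "(delta P x y :: 'k) = 0" using False by (auto simp: delta_def)
    ultimately show ?thesis by (simp add: conv_outside[OF False])
  qed
qed

lemma FI_geom_left_inverse: "conv P (FI_geom P \<nu>) (\<lambda>x y. delta P x y - \<nu> x y) = delta P"
proof -
  have "conv P (FI_geom P \<nu>) (\<lambda>x y. delta P x y - \<nu> x y)
      = (\<lambda>x y. conv P (FI_geom P \<nu>) (delta P) x y - conv P (FI_geom P \<nu>) \<nu> x y)"
    by (rule conv_diff_right[OF FI_geom_finitary])
  also have "\<dots> = (\<lambda>x y. FI_geom P \<nu> x y - (FI_geom P \<nu> x y - delta P x y))"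
    unfolding conv_delta_right[OF FI_geom_incidence] FI_geom_mult_nu ..
  finally show ?thesis by simp
qed

end

definition FI_zero_diag :: "'a::order set \<Rightarrow> ('a \<Rightarrow> 'a \<Rightarrow> 'k::field) set" where
  "FI_zero_diag P = {\<nu> \<in> FI P. \<forall>x. \<nu> x x = 0}"

lemma FI_zero_diag_left_ideal:
  fixes P :: "'a::order set"
  shows "left_ideal (FI_zero_diag P) (FI_ring P :: ('a \<Rightarrow> 'a \<Rightarrow> 'k::field) ring)"
  unfolding left_ideal_def
proof (intro conjI ballI)
  interpret abelian_group "FI_ring P :: ('a \<Rightarrow> 'a \<Rightarrow> 'k) ring" by (rule FI_ring_abelian_group)
  show "additive_subgroup (FI_zero_diag P) (FI_ring P :: ('a \<Rightarrow> 'a \<Rightarrow> 'k) ring)"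
  proof (rule additive_subgroup.intro, rule add.subgroupI)
    show "FI_zero_diag P \<subseteq> carrier (FI_ring P)"
      unfolding FI_zero_diag_def by auto
    show "FI_zero_diag P \<noteq> {}"
      using zero_FI unfolding FI_zero_diag_def by auto
    show "\<ominus>\<^bsub>FI_ring P\<^esub> \<nu> \<in> FI_zero_diag P" if "\<nu> \<in> FI_zero_diag P"
      for \<nu> :: "'a \<Rightarrow> 'a \<Rightarrow> 'k"
      using that unfolding FI_zero_diag_def by (auto simp: FI_ring_a_inv neg_FI)
    show "\<mu> \<oplus>\<^bsub>FI_ring P\<^esub> \<nu> \<in> FI_zero_diag P" if "\<mu> \<in> FI_zero_diag P" "\<nu> \<in> FI_zero_diag P"
      for \<mu> \<nu> :: "'a \<Rightarrow> 'a \<Rightarrow> 'k"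
      using that add_FI unfolding FI_zero_diag_def by auto
  qed
  fix \<alpha> \<nu> :: "'a \<Rightarrow> 'a \<Rightarrow> 'k"
  assume \<alpha>: "\<alpha> \<in> carrier (FI_ring P)" and \<nu>: "\<nu> \<in> FI_zero_diag P"
  have "conv P \<alpha> \<nu> x x = 0" for x
    using \<nu> conv_diag[of x P \<alpha> \<nu>] conv_outside[of x P x] unfolding FI_zero_diag_def by auto
  then show "\<alpha> \<otimes>\<^bsub>FI_ring P\<^esub> \<nu> \<in> FI_zero_diag P"
    using \<alpha> \<nu> conv_FI unfolding FI_zero_diag_def by auto
qed

text \<open>Every maximal left ideal M contains all zero-diagonal series: otherwise \<delta> = m + \<nu> with
  m \<in> M and zero-diagonal \<nu>, and m = \<delta> - \<nu> would be left invertible.\<close>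
lemma FI_zero_diag_in_maximal:
  fixes P :: "'a::order set"
  assumes M: "maximal_left_ideal M (FI_ring P :: ('a \<Rightarrow> 'a \<Rightarrow> 'k::field) ring)"
  shows "FI_zero_diag P \<subseteq> M"
proof (rule maximal_left_ideal_absorbs[OF FI_ring_abelian_group _ M FI_zero_diag_left_ideal])
  show "\<alpha> \<otimes>\<^bsub>FI_ring P\<^esub> (\<beta> \<oplus>\<^bsub>FI_ring P\<^esub> \<gamma>) = \<alpha> \<otimes>\<^bsub>FI_ring P\<^esub> \<beta> \<oplus>\<^bsub>FI_ring P\<^esub> \<alpha> \<otimes>\<^bsub>FI_ring P\<^esub> \<gamma>"
    if "\<alpha> \<in> carrier (FI_ring P)" for \<alpha> \<beta> \<gamma> :: "'a \<Rightarrow> 'a \<Rightarrow> 'k"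
    using that by (simp add: conv_add_right FI_def)
  show "M <+>\<^bsub>FI_ring P\<^esub> FI_zero_diag P \<noteq> carrier (FI_ring P)"
  proof
    assume "M <+>\<^bsub>FI_ring P\<^esub> FI_zero_diag P = carrier (FI_ring P)"
    then have "delta P \<in> M <+>\<^bsub>FI_ring P\<^esub> FI_zero_diag P" using delta_FI by simp
    then obtain m \<nu> where m: "m \<in> M" and \<nu>: "\<nu> \<in> FI P" "\<And>x. \<nu> x x = 0"
      and delta_eq: "delta P = (\<lambda>x y. m x y + \<nu> x y)"
      unfolding set_add_def' FI_zero_diag_def by auto
    from delta_eq have "m = (\<lambda>x y. delta P x y - \<nu> x y)" by (simp add: fun_eq_iff)
    then have inverse: "FI_geom P \<nu> \<otimes>\<^bsub>FI_ring P\<^esub> m = \<one>\<^bsub>FI_ring P\<^esub>"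
      using FI_geom_left_inverse[OF \<nu>] by simp
    have M_left: "left_ideal M (FI_ring P)" and M_proper: "M \<noteq> carrier (FI_ring P)"
      using M unfolding maximal_left_ideal_def by auto
    have "carrier (FI_ring P) \<subseteq> M"
    proof (rule left_ideal_left_invertible[OF M_left m _ inverse])
      show "FI_geom P \<nu> \<in> carrier (FI_ring P)" using FI_geom_FI[OF \<nu>] by simp
      show "\<alpha> \<otimes>\<^bsub>FI_ring P\<^esub> \<one>\<^bsub>FI_ring P\<^esub> = \<alpha>" if "\<alpha> \<in> carrier (FI_ring P)"
        for \<alpha> :: "'a \<Rightarrow> 'a \<Rightarrow> 'k"
        using that by (simp add: FI_def conv_delta_right)
    qed
    with M_proper show False
      using M_left additive_subgroup.a_subset unfolding left_ideal_def by blast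
  qed
qed

lemma FI_zero_diag_jacobson: "FI_zero_diag P \<subseteq> jacobson_radical (FI_ring P)"
  using FI_zero_diag_in_maximal unfolding jacobson_radical_def FI_zero_diag_def by auto

lemma FI_commutator_zero_diag:
  assumes "\<alpha> \<in> FI P" "\<beta> \<in> FI P"
  shows "conv P \<alpha> \<beta> \<ominus>\<^bsub>FI_ring P\<^esub> conv P \<beta> \<alpha> \<in> FI_zero_diag P"
proof -
  have "(\<lambda>x y. conv P \<alpha> \<beta> x y + - conv P \<beta> \<alpha> x y) \<in> FI P"
    using assms by (intro add_FI neg_FI conv_FI)
  moreover have "conv P \<alpha> \<beta> x x = conv P \<beta> \<alpha> x x" for x
    by (cases "x \<in> P") (simp_all add: conv_diag conv_outside mult.commute)
  ultimately show ?thesis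
    using assms by (simp add: FI_ring_a_minus conv_FI FI_zero_diag_def)
qed

theorem corollary3:
  fixes P :: "'a::order set"
  defines "R \<equiv> (FI_ring P :: ('a \<Rightarrow> 'a \<Rightarrow> 'k::field) ring)"
  shows "\<forall>X \<in> carrier (R Quot jacobson_radical R). \<forall>Y \<in> carrier (R Quot jacobson_radical R).
           X \<otimes>\<^bsub>R Quot jacobson_radical R\<^esub> Y = Y \<otimes>\<^bsub>R Quot jacobson_radical R\<^esub> X"
  unfolding R_def
proof (rule quotient_mult_commute[OF FI_ring_abelian_group])
  show "additive_subgroup (jacobson_radical (FI_ring P)) (FI_ring P)"
    by (rule jacobson_radical_additive_subgroup[OF FI_ring_abelian_group])
  show "\<alpha> \<otimes>\<^bsub>FI_ring P\<^esub> \<beta> \<in> carrier (FI_ring P)"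
    if "\<alpha> \<in> carrier (FI_ring P)" "\<beta> \<in> carrier (FI_ring P)" for \<alpha> \<beta> :: "'a \<Rightarrow> 'a \<Rightarrow> 'k"
    using that by (simp add: conv_FI)
  show "\<alpha> \<otimes>\<^bsub>FI_ring P\<^esub> \<beta> \<ominus>\<^bsub>FI_ring P\<^esub> \<beta> \<otimes>\<^bsub>FI_ring P\<^esub> \<alpha> \<in> jacobson_radical (FI_ring P)"
    if "\<alpha> \<in> carrier (FI_ring P)" "\<beta> \<in> carrier (FI_ring P)" for \<alpha> \<beta> :: "'a \<Rightarrow> 'a \<Rightarrow> 'k"
    using that FI_commutator_zero_diag FI_zero_diag_jacobson by fastforce
qed

end
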